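(* Two semifactor sets of a wide ACI-matrix over a field $\mathbb{F}$ cannot be disjoint.
   Context: Let $\mathbb{F}$ be a field. An ACI-matrix is a matrix with entries in $\mathbb{F}[x_1,\dots,x_k]$ whose entries are polynomials of degree at most one and such that no indeterminate appears in two different columns. It is wide if it has more columns than rows. A completion is an assignment of values in $\mathbb{F}$ to all indeterminates; $\mathrm{maxRank}(N)$ is the maximum rank of a completion. ACI-matrices (and blocks) of size $0\times q$ ($q>0$, wide degenerate), $p\times 0$ ($p>0$, tall degenerate) and $0\times0$ (void) are allowed. $N$ is FRmR if $\mathrm{maxRank}(N)=\mathrm{rows}(N)$, FCmR if $\mathrm{maxRank}(N)=\mathrm{cols}(N)$; by convention tall degenerate is FRmR, wide degenerate is FCmR, void is both. For an $m\times n$ block matrix $\begin{bmatrix} A & B\\ 0 & C\end{bmatrix}$ with lower-left $r\times s$ zero block, the zero block is Medium if $r+s=\max\{m,n\}$. For $F=\{f_1<\dots<f_s\}\subseteq\{1,\dots,n\}$ with complement $\{g_1<\dots<g_{n-s}\}$, $Q_F$ is the $n\times n$ permutation matrix such that $MQ_F$ has as columns $f_1,\dots,f_s,g_1,\dots,g_{n-s}$ of $M$ in that order. For an $m\times n$ ACI-matrix $M$, $F$ is a semifactor set of $M$ if there is a nonsingular constant $m\times m$ matrix $R$ with $RMQ_F=\begin{bmatrix} A & B\\ 0 & C\end{bmatrix}$, where $A$ has $\#F$ columns, the zero block is Medium, $A$ is FRmR and $C$ is FCmR. *)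

theory Defs
  imports "Jordan_Normal_Form.DL_Rank"
begin

(* An entry of an ACI-matrix over F[x_1,...,x_k] is a polynomial of degree <= 1,
   represented by its coefficient function p :: nat => 'a:
   p 0 is the constant term and p v (1 <= v <= k) is the coefficient of x_v. *)

definition aci_matrix :: "nat \<Rightarrow> (nat \<Rightarrow> 'a::field) mat \<Rightarrow> bool" where
  "aci_matrix k M \<longleftrightarrow>
     (\<forall>i j t. i < dim_row M \<longrightarrow> j < dim_col M \<longrightarrow> k < t \<longrightarrow> (M $$ (i,j)) t = 0) \<and>
     (\<forall>v\<in>{1..k}. \<forall>i j i' j'. i < dim_row M \<longrightarrow> j < dim_col M \<longrightarrow>
        i' < dim_row M \<longrightarrow> j' < dim_col M \<longrightarrow>
        (M $$ (i,j)) v \<noteq> 0 \<longrightarrow> (M $$ (i',j')) v \<noteq> 0 \<longrightarrow> j = j')"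

definition completion :: "nat \<Rightarrow> (nat \<Rightarrow> 'a::field) \<Rightarrow> (nat \<Rightarrow> 'a) mat \<Rightarrow> 'a mat" where
  "completion k x M = mat (dim_row M) (dim_col M)
     (\<lambda>(i,j). (M $$ (i,j)) 0 + (\<Sum>v\<in>{1..k}. (M $$ (i,j)) v * x v))"

definition mat_rank :: "'a::field mat \<Rightarrow> nat" where
  "mat_rank A = vec_space.rank (dim_row A) A"

definition maxRank :: "nat \<Rightarrow> (nat \<Rightarrow> 'a::field) mat \<Rightarrow> nat" where
  "maxRank k M = Max {mat_rank (completion k x M) | x. True}"

definition FRmR :: "nat \<Rightarrow> (nat \<Rightarrow> 'a::field) mat \<Rightarrow> bool" where
  "FRmR k M \<longleftrightarrow> maxRank k M = dim_row M \<or> dim_col M = 0"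

definition FCmR :: "nat \<Rightarrow> (nat \<Rightarrow> 'a::field) mat \<Rightarrow> bool" where
  "FCmR k M \<longleftrightarrow> maxRank k M = dim_col M \<or> dim_row M = 0"

definition const_mult :: "'a::field mat \<Rightarrow> (nat \<Rightarrow> 'a) mat \<Rightarrow> (nat \<Rightarrow> 'a) mat" where
  "const_mult R M = mat (dim_row R) (dim_col M)
     (\<lambda>(i,j). \<lambda>t. \<Sum>l<dim_col R. R $$ (i,l) * (M $$ (l,j)) t)"

(* M Q_F: columns f_1 < ... < f_s of F, then the complement g_1 < ... in increasing order
   (columns are 0-indexed) *)
definition col_order :: "nat set \<Rightarrow> nat \<Rightarrow> nat list" where
  "col_order F n = sorted_list_of_set F @ sorted_list_of_set ({0..<n} - F)"

definition mult_QF :: "(nat \<Rightarrow> 'a) mat \<Rightarrow> nat set \<Rightarrow> (nat \<Rightarrow> 'a) mat" where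
  "mult_QF M F = mat (dim_row M) (dim_col M) (\<lambda>(i,j). M $$ (i, col_order F (dim_col M) ! j))"

definition block :: "'b mat \<Rightarrow> nat \<Rightarrow> nat \<Rightarrow> nat \<Rightarrow> nat \<Rightarrow> 'b mat" where
  "block N r0 c0 r c = mat r c (\<lambda>(i,j). N $$ (r0 + i, c0 + j))"

definition semifactor_set :: "nat \<Rightarrow> (nat \<Rightarrow> 'a::field) mat \<Rightarrow> nat set \<Rightarrow> bool" where
  "semifactor_set k M F \<longleftrightarrow>
     F \<subseteq> {0..<dim_col M} \<and>
     (\<exists>R r. R \<in> carrier_mat (dim_row M) (dim_row M) \<and> invertible_mat R \<and>
        r \<le> dim_row M \<and> r + card F = max (dim_row M) (dim_col M) \<and>
        (let N = const_mult R (mult_QF M F);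
             m = dim_row M; n = dim_col M; s = card F in
           (\<forall>i<r. \<forall>j<s. N $$ (m - r + i, j) = (\<lambda>_. 0)) \<and>
           FRmR k (block N 0 0 (m - r) s) \<and>
           FCmR k (block N (m - r) s r (n - s))))"

end

theory Submission
  imports Defs
begin

text \<open>
  Fix a completion \<open>x\<close> and write \<open>P\<close> for the completed matrix; completion commutes with
  the constant left factor \<open>R\<close>, with the column reordering \<open>Q\<^sub>F\<close> and with taking blocks.
  For a wide \<open>m \<times> n\<close> matrix the lower right block \<open>C\<close> of a semifactor set \<open>F\<close> is square of
  size \<open>r = n - #F\<close>, and FCmR yields a completion with \<open>det C\<^sub>x \<noteq> 0\<close>. The columns of \<open>R P\<close>
  outside \<open>F\<close> have \<open>C\<^sub>x\<close> as their last \<open>r\<close> rows, so the columns of \<open>P\<close> outside \<open>F\<close> are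
  linearly independent. For a second semifactor set \<open>G\<close>, in every completion the columns of
  \<open>R' P\<close> indexed by \<open>G\<close> vanish in their last \<open>r'\<close> rows; they lie in a space of dimension
  \<open>m - r' < n - r' = #G\<close>, hence the columns of \<open>P\<close> indexed by \<open>G\<close> are dependent. So \<open>G\<close> is
  not contained in the complement of \<open>F\<close>.
\<close>

lemma completion_dims [simp]:
  "dim_row (completion k x A) = dim_row A" "dim_col (completion k x A) = dim_col A"
  by (simp_all add: completion_def)

lemma completion_carrier [simp]: "completion k x A \<in> carrier_mat (dim_row A) (dim_col A)"
  by (rule carrier_matI) simp_all

lemma const_mult_dims [simp]:
  "dim_row (const_mult R N) = dim_row R" "dim_col (const_mult R N) = dim_col N"
  by (simp_all add: const_mult_def)

lemma mult_QF_dims [simp]: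
  "dim_row (mult_QF M S) = dim_row M" "dim_col (mult_QF M S) = dim_col M"
  by (simp_all add: mult_QF_def)

lemma block_dims [simp]:
  "dim_row (block N r0 c0 r c) = r" "dim_col (block N r0 c0 r c) = c"
  by (simp_all add: block_def)

lemma index_block [simp]:
  "i < r \<Longrightarrow> j < c \<Longrightarrow> block N r0 c0 r c $$ (i, j) = N $$ (r0 + i, c0 + j)"
  by (simp add: block_def)

lemma index_completion:
  "i < dim_row A \<Longrightarrow> j < dim_col A \<Longrightarrow>
    completion k x A $$ (i, j) = (A $$ (i, j)) 0 + (\<Sum>v\<in>{1..k}. (A $$ (i, j)) v * x v)"
  by (simp add: completion_def)

lemma completion_const_mult:
  assumes "dim_col R = dim_row N"
  shows "completion k x (const_mult R N) = R * completion k x N"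
proof (rule eq_matI)
  fix i j assume ij: "i < dim_row (R * completion k x N)" "j < dim_col (R * completion k x N)"
  have "(\<Sum>v\<in>{1..k}. (\<Sum>l<dim_col R. R $$ (i, l) * (N $$ (l, j)) v) * x v)
      = (\<Sum>l<dim_col R. R $$ (i, l) * (\<Sum>v\<in>{1..k}. (N $$ (l, j)) v * x v))"
    by (simp add: sum_distrib_left sum_distrib_right mult.assoc) (rule sum.swap)
  then show "completion k x (const_mult R N) $$ (i, j) = (R * completion k x N) $$ (i, j)"
    using ij assms
    by (simp add: index_completion const_mult_def scalar_prod_def atLeast0LessThan
        distrib_left sum.distrib)
qed auto

lemma completion_block:
  assumes "r0 + r \<le> dim_row N" "c0 + c \<le> dim_col N"
  shows "completion k x (block N r0 c0 r c) = block (completion k x N) r0 c0 r c"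
  using assms by (intro eq_matI) (auto simp: index_completion)

lemma length_col_order:
  "finite S \<Longrightarrow> length (col_order S n) = card S + card ({0..<n} - S)"
  by (simp add: col_order_def)

lemma nth_col_order_left:
  "finite S \<Longrightarrow> j < card S \<Longrightarrow> col_order S n ! j = sorted_list_of_set S ! j"
  by (simp add: col_order_def nth_append)

lemma nth_col_order_right:
  "finite S \<Longrightarrow> col_order S n ! (card S + j) = sorted_list_of_set ({0..<n} - S) ! j"
  by (simp add: col_order_def nth_append)

lemma col_order_nth_less:
  assumes "S \<subseteq> {0..<n}" "j < n"
  shows "col_order S n ! j < n"
proof -
  have "finite S" using assms(1) finite_subset by blast
  have "card S \<le> n" using card_mono[OF finite_atLeastLessThan assms(1)] by simp
  with \<open>finite S\<close> assms(1) have "length (col_order S n) = n"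
    by (simp add: length_col_order card_Diff_subset)
  then have "col_order S n ! j \<in> set (col_order S n)" using assms(2) by simp
  moreover have "set (col_order S n) = S \<union> ({0..<n} - S)"
    using \<open>finite S\<close> by (simp add: col_order_def)
  ultimately show ?thesis using assms(1) by auto
qed

lemma completion_mult_QF:
  assumes "S \<subseteq> {0..<dim_col M}"
  shows "completion k x (mult_QF M S) =
    mat (dim_row M) (dim_col M) (\<lambda>(i, j). completion k x M $$ (i, col_order S (dim_col M) ! j))"
  using assms col_order_nth_less[OF assms]
  by (intro eq_matI) (auto simp: index_completion mult_QF_def)

lemma index_completion_const_mult_QF:
  assumes "dim_col R = dim_row M" "S \<subseteq> {0..<dim_col M}" "i < dim_row R" "j < dim_col M"
  shows "completion k x (const_mult R (mult_QF M S)) $$ (i, j) =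
    (R * completion k x M) $$ (i, col_order S (dim_col M) ! j)"
  using assms col_order_nth_less[OF assms(2,4)]
  by (simp add: completion_const_mult completion_mult_QF scalar_prod_def)

lemma maxRank_attained: "\<exists>x. mat_rank (completion k x A) = maxRank k A"
proof -
  let ?ranks = "{mat_rank (completion k x A) | x. True}"
  have "?ranks \<subseteq> {..dim_col A}"
    using vec_space.rank_le_nc[OF completion_carrier] by (auto simp: mat_rank_def)
  then have "finite ?ranks" by (rule finite_subset) simp
  then have "Max ?ranks \<in> ?ranks" by (intro Max_in) auto
  then show ?thesis by (auto simp: maxRank_def)
qed

lemma FCmR_square_nonsingular_completion:
  fixes C :: "(nat \<Rightarrow> 'a::field) mat"
  assumes "FCmR k C" "C \<in> carrier_mat r r"
  obtains x where "det (completion k x C) \<noteq> 0"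
proof -
  have carrier: "completion k x C \<in> carrier_mat r r" for x
    using assms(2) by (intro carrier_matI) auto
  show ?thesis
  proof (cases "r = 0")
    case True
    then show ?thesis using carrier[of undefined] by (intro that[of undefined]) simp
  next
    case False
    then have "maxRank k C = r" using assms by (auto simp: FCmR_def)
    moreover obtain x where "mat_rank (completion k x C) = maxRank k C"
      using maxRank_attained by blast
    ultimately have "vec_space.rank r (completion k x C) = r"
      using assms(2) by (auto simp: mat_rank_def)
    then show ?thesis using vec_space.det_rank_iff[OF carrier] that by blast
  qed
qed

lemma sum_nth_sorted_list_of_set:
  assumes "finite S"
  shows "(\<Sum>j<card S. f (sorted_list_of_set S ! j)) = sum f S"
  using sum.reindex_bij_betw[OF bij_betw_nth[of "sorted_list_of_set S" "{..<card S}" S]] assms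
  by simp

lemma index_mult_mat_vec_supported:
  assumes "A \<in> carrier_mat nr n" "v \<in> carrier_vec n" "i < nr" "S \<subseteq> {0..<n}"
    and "\<And>c. c \<in> {0..<n} - S \<Longrightarrow> v $ c = 0"
  shows "(A *\<^sub>v v) $ i = (\<Sum>c\<in>S. A $$ (i, c) * v $ c)"
proof -
  have "(A *\<^sub>v v) $ i = (\<Sum>c\<in>{0..<n}. A $$ (i, c) * v $ c)"
    using assms(1-3) by (simp add: scalar_prod_def)
  also have "\<dots> = (\<Sum>c\<in>S. A $$ (i, c) * v $ c)"
    using assms(4,5) by (intro sum.mono_neutral_right) auto
  finally show ?thesis .
qed

lemma extend_vec_by_zero:
  assumes "distinct js" "set js \<subseteq> {0..<n}" "w \<in> carrier_vec (length js)"
  obtains v where "v \<in> carrier_vec n" "\<And>j. j < length js \<Longrightarrow> v $ (js ! j) = w $ j"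
    "\<And>c. c \<in> {0..<n} - set js \<Longrightarrow> v $ c = 0"
proof
  let ?pos = "the_inv_into {..<length js} ((!) js)"
  define v where "v = vec n (\<lambda>c. if c \<in> set js then w $ ?pos c else 0)"
  have bij: "bij_betw ((!) js) {..<length js} (set js)" using assms(1) by (rule bij_betw_nth) simp_all
  show "v \<in> carrier_vec n" by (simp add: v_def)
  show "v $ (js ! j) = w $ j" if "j < length js" for j
  proof -
    have "js ! j \<in> set js" using that by (rule nth_mem)
    moreover have "js ! j < n" using calculation assms(2) by auto
    ultimately show ?thesis
      using that the_inv_into_f_f[OF bij_betw_imp_inj_on[OF bij]] by (simp add: v_def)
  qed
  show "v $ c = 0" if "c \<in> {0..<n} - set js" for c
    using that by (simp add: v_def)
qed

lemma invertible_mat_mult_vec_eq_0: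
  assumes "invertible_mat R" "R \<in> carrier_mat m m" "u \<in> carrier_vec m" "R *\<^sub>v u = 0\<^sub>v m"
  shows "u = 0\<^sub>v m"
proof -
  obtain B where "inverts_mat R B" "inverts_mat B R"
    using assms(1) by (auto simp: invertible_mat_def)
  then have B: "B \<in> carrier_mat m m" and BR: "B * R = 1\<^sub>m m"
    using assms(2) unfolding inverts_mat_def
    by (metis carrier_matD carrier_matI index_mult_mat(2,3) index_one_mat(2,3))+
  have "u = (B * R) *\<^sub>v u" using BR assms(3) by simp
  also have "\<dots> = B *\<^sub>v (R *\<^sub>v u)" using B assms(2,3) by (rule assoc_mult_mat_vec)
  also have "\<dots> = 0\<^sub>v m" using B assms(4) by auto
  finally show ?thesis .
qed

lemma kernel_nontrivial_if_zero_rows: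
  fixes A :: "'a::field mat"
  assumes A: "A \<in> carrier_mat m q" and "p < q"
    and zero: "\<And>i j. p \<le> i \<Longrightarrow> i < m \<Longrightarrow> j < q \<Longrightarrow> A $$ (i, j) = 0"
  obtains w where "w \<in> carrier_vec q" "w \<noteq> 0\<^sub>v q" "A *\<^sub>v w = 0\<^sub>v m"
proof -
  define T where "T = mat q q (\<lambda>(i, j). if i < p \<and> i < m then A $$ (i, j) else 0)"
  have T: "T \<in> carrier_mat q q" by (simp add: T_def)
  have last_row_0: "T = mat\<^sub>r q q (\<lambda>i. if i = q - 1 then 0\<^sub>v q else row T i)"
    using \<open>p < q\<close> by (intro eq_matI) (auto simp: T_def)
  have "det T = 0"
    by (subst last_row_0, rule det_row_0) (use \<open>p < q\<close> T in auto)
  then obtain w where w: "w \<in> carrier_vec q" "w \<noteq> 0\<^sub>v q" "T *\<^sub>v w = 0\<^sub>v q"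
    using det_0_iff_vec_prod_zero_field[OF T] by blast
  have "(A *\<^sub>v w) $ i = 0" if "i < m" for i
  proof (cases "i < p")
    case True
    then have "(A *\<^sub>v w) $ i = (T *\<^sub>v w) $ i"
      using that A \<open>p < q\<close> w(1) by (simp add: T_def scalar_prod_def)
    then show ?thesis using w(3) True \<open>p < q\<close> by simp
  next
    case False
    then show ?thesis using that A w(1) zero by (simp add: scalar_prod_def)
  qed
  then have "A *\<^sub>v w = 0\<^sub>v m" using A by (intro eq_vecI) auto
  with w(1,2) show ?thesis by (rule that)
qed

lemma mult_vec_eq_0_if_lower_block_nonsingular:
  fixes P :: "'a::field mat"
  assumes R: "R \<in> carrier_mat m m" and P: "P \<in> carrier_mat m n"
    and H: "H \<subseteq> {0..<n}" "card H = r" "r \<le> m"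
    and det: "det (mat r r (\<lambda>(i, j). (R * P) $$ (m - r + i, sorted_list_of_set H ! j))) \<noteq> 0"
    and v: "v \<in> carrier_vec n" "\<And>c. c \<in> {0..<n} - H \<Longrightarrow> v $ c = 0" "P *\<^sub>v v = 0\<^sub>v m"
  shows "v = 0\<^sub>v n"
proof -
  have "finite H" using H(1) finite_subset by blast
  define hs where "hs = sorted_list_of_set H"
  define C where "C = mat r r (\<lambda>(i, j). (R * P) $$ (m - r + i, hs ! j))"
  define z where "z = vec r (\<lambda>j. v $ (hs ! j))"
  have "C *\<^sub>v z = 0\<^sub>v r"
  proof (rule eq_vecI)
    fix i assume "i < dim_vec (0\<^sub>v r :: 'a vec)"
    then have i: "i < r" by simp
    have "(C *\<^sub>v z) $ i = (\<Sum>j<r. (R * P) $$ (m - r + i, hs ! j) * v $ (hs ! j))"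
      using i by (simp add: C_def z_def scalar_prod_def atLeast0LessThan)
    also have "\<dots> = (\<Sum>c\<in>H. (R * P) $$ (m - r + i, c) * v $ c)"
      using sum_nth_sorted_list_of_set[OF \<open>finite H\<close>, of "\<lambda>c. (R * P) $$ (m - r + i, c) * v $ c"]
        H(2)
      by (simp add: hs_def)
    also have "\<dots> = ((R * P) *\<^sub>v v) $ (m - r + i)"
      using R P v(1,2) i H by (intro index_mult_mat_vec_supported[symmetric]) auto
    also have "\<dots> = (R *\<^sub>v 0\<^sub>v m) $ (m - r + i)"
      using R P v(1,3) by (simp add: assoc_mult_mat_vec)
    also have "\<dots> = 0" using R i H(3) by auto
    finally show "(C *\<^sub>v z) $ i = 0\<^sub>v r $ i" using i by simp
  qed (simp add: C_def)
  moreover have "C \<in> carrier_mat r r" "z \<in> carrier_vec r" "det C \<noteq> 0"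
    using det by (simp_all add: C_def z_def hs_def)
  ultimately have z: "z = 0\<^sub>v r" using det_0_iff_vec_prod_zero_field by blast
  show "v = 0\<^sub>v n"
  proof (rule eq_vecI)
    fix c assume "c < dim_vec (0\<^sub>v n :: 'a vec)"
    then have "c < n" by simp
    show "v $ c = 0\<^sub>v n $ c"
    proof (cases "c \<in> H")
      case True
      then have "c \<in> set hs" using \<open>finite H\<close> by (simp add: hs_def)
      moreover have "length hs = r" using H(2) by (simp add: hs_def)
      ultimately obtain j where j: "j < r" "hs ! j = c" by (auto simp: in_set_conv_nth)
      then have "v $ c = z $ j" by (simp add: z_def)
      then show ?thesis using z j(1) \<open>c < n\<close> by simp
    qed (use v(2) \<open>c < n\<close> in simp)
  qed (use v(1) in simp)
qed

lemma supported_kernel_vec_from_cols: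
  fixes A :: "'a::field mat"
  assumes A: "A \<in> carrier_mat m n" and G: "G \<subseteq> {0..<n}"
    and w: "w \<in> carrier_vec (card G)" "w \<noteq> 0\<^sub>v (card G)"
    and Aw: "mat m (card G) (\<lambda>(i, j). A $$ (i, sorted_list_of_set G ! j)) *\<^sub>v w = 0\<^sub>v m"
  obtains v where "v \<in> carrier_vec n" "v \<noteq> 0\<^sub>v n" "\<And>c. c \<in> {0..<n} - G \<Longrightarrow> v $ c = 0"
    "A *\<^sub>v v = 0\<^sub>v m"
proof -
  have "finite G" using G finite_subset by blast
  define gs where "gs = sorted_list_of_set G"
  have gs: "distinct gs" "set gs = G" "length gs = card G"
    using \<open>finite G\<close> by (simp_all add: gs_def)
  have "set gs \<subseteq> {0..<n}" "w \<in> carrier_vec (length gs)" using G gs w(1) by simp_all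
  then obtain v where v: "v \<in> carrier_vec n" "\<And>j. j < length gs \<Longrightarrow> v $ (gs ! j) = w $ j"
    "\<And>c. c \<in> {0..<n} - set gs \<Longrightarrow> v $ c = 0"
    using extend_vec_by_zero[OF gs(1)] by blast
  have Av: "A *\<^sub>v v = 0\<^sub>v m"
  proof (rule eq_vecI)
    fix i assume "i < dim_vec (0\<^sub>v m :: 'a vec)"
    then have i: "i < m" by simp
    have "(A *\<^sub>v v) $ i = (\<Sum>c\<in>G. A $$ (i, c) * v $ c)"
      using A v(1,3) i G gs(2) by (intro index_mult_mat_vec_supported) auto
    also have "\<dots> = (\<Sum>j<card G. A $$ (i, gs ! j) * v $ (gs ! j))"
      using sum_nth_sorted_list_of_set[OF \<open>finite G\<close>, of "\<lambda>c. A $$ (i, c) * v $ c"]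
      by (simp add: gs_def)
    also have "\<dots> = (mat m (card G) (\<lambda>(i, j). A $$ (i, gs ! j)) *\<^sub>v w) $ i"
      using i w(1) v(2) gs(3) by (simp add: scalar_prod_def atLeast0LessThan)
    also have "\<dots> = 0" using Aw[folded gs_def] i by simp
    finally show "(A *\<^sub>v v) $ i = 0\<^sub>v m $ i" using i by simp
  qed (use A in simp)
  have "v \<noteq> 0\<^sub>v n"
  proof
    assume "v = 0\<^sub>v n"
    have "w $ j = 0" if "j < card G" for j
    proof -
      have "gs ! j \<in> G" using that gs(2,3) by auto
      then show ?thesis using v(2)[of j] that gs(3) G \<open>v = 0\<^sub>v n\<close> by auto
    qed
    then have "w = 0\<^sub>v (card G)" using w(1) by (intro eq_vecI) auto
    with w(2) show False by contradiction
  qed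
  moreover have "v $ c = 0" if "c \<in> {0..<n} - G" for c using v(3) that gs(2) by simp
  ultimately show ?thesis using v(1) Av by (intro that)
qed

lemma semifactor_setE:
  assumes "semifactor_set k M S" "dim_row M = m" "dim_col M = n" "m \<le> n"
  obtains R r where "R \<in> carrier_mat m m" "invertible_mat R" "r \<le> m" "r + card S = n"
    "S \<subseteq> {0..<n}"
    "\<And>i j. m - r \<le> i \<Longrightarrow> i < m \<Longrightarrow> j < card S \<Longrightarrow>
       const_mult R (mult_QF M S) $$ (i, j) = (\<lambda>_. 0)"
    "FCmR k (block (const_mult R (mult_QF M S)) (m - r) (card S) r r)"
proof -
  obtain R r where R: "R \<in> carrier_mat m m" "invertible_mat R"
    and r: "r \<le> m" "r + card S = n"
    and zero: "\<forall>i<r. \<forall>j<card S. const_mult R (mult_QF M S) $$ (m - r + i, j) = (\<lambda>_. 0)"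
    and FC: "FCmR k (block (const_mult R (mult_QF M S)) (m - r) (card S) r (n - card S))"
    using assms unfolding semifactor_set_def Let_def by (auto simp: max_def)
  show ?thesis
  proof (rule that[OF R r])
    show "S \<subseteq> {0..<n}" using assms(1,3) by (simp add: semifactor_set_def)
    show "const_mult R (mult_QF M S) $$ (i, j) = (\<lambda>_. 0)"
      if "m - r \<le> i" "i < m" "j < card S" for i j
    proof -
      have "i = m - r + (i - (m - r))" "i - (m - r) < r" using that r(1) by linarith+
      then show ?thesis using zero that(3) by metis
    qed
    show "FCmR k (block (const_mult R (mult_QF M S)) (m - r) (card S) r r)"
      using FC r(2) by (metis add_diff_cancel_right')
  qed
qed

lemma semifactor_set_cols_indep_outside:
  assumes "semifactor_set k M F" "dim_row M \<le> dim_col M"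
  obtains x where "\<And>v. v \<in> carrier_vec (dim_col M) \<Longrightarrow> (\<And>c. c \<in> F \<Longrightarrow> v $ c = 0) \<Longrightarrow>
    completion k x M *\<^sub>v v = 0\<^sub>v (dim_row M) \<Longrightarrow> v = 0\<^sub>v (dim_col M)"
proof -
  define m where "m = dim_row M"
  define n where "n = dim_col M"
  obtain R r where R: "R \<in> carrier_mat m m" and "invertible_mat R"
    and r: "r \<le> m" "r + card F = n" and F: "F \<subseteq> {0..<n}"
    and "\<And>i j. m - r \<le> i \<Longrightarrow> i < m \<Longrightarrow> j < card F \<Longrightarrow>
       const_mult R (mult_QF M F) $$ (i, j) = (\<lambda>_. 0)"
    and FC: "FCmR k (block (const_mult R (mult_QF M F)) (m - r) (card F) r r)"
    using semifactor_setE[OF assms(1) m_def[symmetric] n_def[symmetric]] assms(2)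
    unfolding m_def n_def by blast
  have "finite F" using F finite_subset by blast
  define H where "H = {0..<n} - F"
  have H: "H \<subseteq> {0..<n}" "card H = r" using r(2) F \<open>finite F\<close> by (auto simp: H_def card_Diff_subset)
  define C where "C = block (const_mult R (mult_QF M F)) (m - r) (card F) r r"
  have "C \<in> carrier_mat r r" unfolding C_def by (rule carrier_matI) simp_all
  then obtain x where det: "det (completion k x C) \<noteq> 0"
    using FCmR_square_nonsingular_completion FC unfolding C_def by blast
  have "completion k x C =
      mat r r (\<lambda>(i, j). (R * completion k x M) $$ (m - r + i, sorted_list_of_set H ! j))"
    using r R F \<open>finite F\<close>
    by (intro eq_matI) (simp_all add: C_def completion_block index_completion_const_mult_QF
        nth_col_order_right H_def m_def n_def)
  with det have det_block:
    "det (mat r r (\<lambda>(i, j). (R * completion k x M) $$ (m - r + i, sorted_list_of_set H ! j))) \<noteq> 0"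
    by simp
  show ?thesis
  proof (rule that)
    fix v assume v: "v \<in> carrier_vec (dim_col M)" "\<And>c. c \<in> F \<Longrightarrow> v $ c = 0"
      "completion k x M *\<^sub>v v = 0\<^sub>v (dim_row M)"
    have "v $ c = 0" if "c \<in> {0..<n} - H" for c using v(2) that by (simp add: H_def)
    with v(1,3) show "v = 0\<^sub>v (dim_col M)"
      using mult_vec_eq_0_if_lower_block_nonsingular[OF R completion_carrier[of k x M, folded m_def n_def]
          H(1,2) r(1) det_block]
      unfolding m_def n_def by blast
  qed
qed

lemma semifactor_set_cols_dependent:
  assumes "semifactor_set k M G" "dim_row M < dim_col M"
  obtains v where "v \<in> carrier_vec (dim_col M)" "v \<noteq> 0\<^sub>v (dim_col M)"
    "\<And>c. c \<in> {0..<dim_col M} - G \<Longrightarrow> v $ c = 0" "completion k x M *\<^sub>v v = 0\<^sub>v (dim_row M)"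
proof -
  define m where "m = dim_row M"
  define n where "n = dim_col M"
  obtain R r where R: "R \<in> carrier_mat m m" "invertible_mat R"
    and r: "r \<le> m" "r + card G = n" and G: "G \<subseteq> {0..<n}"
    and zero: "\<And>i j. m - r \<le> i \<Longrightarrow> i < m \<Longrightarrow> j < card G \<Longrightarrow>
      const_mult R (mult_QF M G) $$ (i, j) = (\<lambda>_. 0)"
    and "FCmR k (block (const_mult R (mult_QF M G)) (m - r) (card G) r r)"
    using semifactor_setE[OF assms(1) m_def[symmetric] n_def[symmetric]] less_imp_le[OF assms(2)]
    unfolding m_def n_def by blast
  have "finite G" using G finite_subset by blast
  let ?P = "completion k x M"
  define B where "B = mat m (card G) (\<lambda>(i, j). (R * ?P) $$ (i, sorted_list_of_set G ! j))"
  have B: "B \<in> carrier_mat m (card G)" by (simp add: B_def)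
  have B_zero: "B $$ (i, j) = 0" if "m - r \<le> i" "i < m" "j < card G" for i j
  proof -
    have "B $$ (i, j) = completion k x (const_mult R (mult_QF M G)) $$ (i, j)"
      using that R G r \<open>finite G\<close>
      by (simp add: B_def index_completion_const_mult_QF nth_col_order_left m_def n_def)
    also have "\<dots> = 0" using that zero R r by (simp add: index_completion m_def n_def)
    finally show ?thesis .
  qed
  have "m - r < card G" using r assms(2) by (simp add: m_def n_def)
  then obtain w where w: "w \<in> carrier_vec (card G)" "w \<noteq> 0\<^sub>v (card G)" "B *\<^sub>v w = 0\<^sub>v m"
    using kernel_nontrivial_if_zero_rows[OF B _ B_zero] by blast
  have "R * ?P \<in> carrier_mat m n"
    using mult_carrier_mat[OF R(1) completion_carrier[of k x M, folded m_def n_def]] .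
  then obtain v where v: "v \<in> carrier_vec n" "v \<noteq> 0\<^sub>v n" "\<And>c. c \<in> {0..<n} - G \<Longrightarrow> v $ c = 0"
    "(R * ?P) *\<^sub>v v = 0\<^sub>v m"
    using supported_kernel_vec_from_cols[OF _ G w(1,2) w(3)[unfolded B_def]] by blast
  have "?P *\<^sub>v v \<in> carrier_vec m" by (intro carrier_vecI) (simp add: m_def)
  moreover have "R *\<^sub>v (?P *\<^sub>v v) = 0\<^sub>v m"
    using v(4) assoc_mult_mat_vec[of R m m ?P n v] R(1) v(1) by (simp add: m_def n_def)
  ultimately have "?P *\<^sub>v v = 0\<^sub>v m" by (rule invertible_mat_mult_vec_eq_0[OF R(2,1)])
  with v(1-3) show ?thesis unfolding m_def n_def by (rule that)
qed

theorem lemma5p2: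
  fixes M :: "(nat \<Rightarrow> 'a::field) mat" and k :: nat and F G :: "nat set"
  assumes "aci_matrix k M"
    and "dim_row M < dim_col M"
    and "semifactor_set k M F"
    and "semifactor_set k M G"
  shows "F \<inter> G \<noteq> {}"
proof
  assume disjoint: "F \<inter> G = {}"
  obtain x where indep: "\<And>v. v \<in> carrier_vec (dim_col M) \<Longrightarrow> (\<And>c. c \<in> F \<Longrightarrow> v $ c = 0) \<Longrightarrow>
      completion k x M *\<^sub>v v = 0\<^sub>v (dim_row M) \<Longrightarrow> v = 0\<^sub>v (dim_col M)"
    using semifactor_set_cols_indep_outside[OF assms(3) less_imp_le[OF assms(2)]] by blast
  obtain v where v: "v \<in> carrier_vec (dim_col M)" "v \<noteq> 0\<^sub>v (dim_col M)"
    "\<And>c. c \<in> {0..<dim_col M} - G \<Longrightarrow> v $ c = 0" "completion k x M *\<^sub>v v = 0\<^sub>v (dim_row M)"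
    using semifactor_set_cols_dependent[OF assms(4,2)] by blast
  have "F \<subseteq> {0..<dim_col M}" using assms(3) by (simp add: semifactor_set_def)
  then have "v $ c = 0" if "c \<in> F" for c using that disjoint v(3) by blast
  then show False using indep v by blast
qed

end
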